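(* Let $R$ be a nonzero polynomial, $m\ge1$ an integer and $\alpha\in\mathbb{C}$ such that $Q(z)=\frac{R(z)}{(z-\alpha)^m}$ is not a polynomial (i.e. $Q$ has a pole at $\alpha$). Then for every $r>0$, the open disk $\{|z|<r\}$ contains no zeroes of $Q^{(n)}$ for all sufficiently large $n$. *)

theory Defs
  imports "HOL-Complex_Analysis.Complex_Analysis" "HOL-Computational_Algebra.Polynomial"
begin

end

(*
  Near the pole, Q(z) = (\<Sum>j\<le>d. b j * (z - \<alpha>) powi (j - K)) with K \<ge> 1 the order of the pole
  and b 0 = q(\<alpha>) \<noteq> 0, where q(z) = \<Sum>j\<le>d. b j * (z - \<alpha>)^j is the numerator after cancelling.
  Differentiating termwise, with rising factorials (x)\<^sub>n = pochhammer x n,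
    Q^(n)(z) = (-1)^n * (z - \<alpha>) powi (-K-n) * (\<Sum>j\<le>d. b j * (K - j)\<^sub>n * (z - \<alpha>)^j).
  For 1 \<le> j \<le> d < n we have |(K - j)\<^sub>n| \<le> (K - 1)\<^sub>n = (K - 1) / (K - 1 + n) * (K)\<^sub>n, so on a
  bounded set the term j = 0 eventually outweighs all the others and the sum cannot vanish.
*)
theory Submission
  imports Defs
begin

lemma has_field_derivative_falling_power_int:
  fixes \<alpha> z :: "'a :: real_normed_field"
  assumes "z \<noteq> \<alpha>"
  shows "((\<lambda>w. (-1) ^ n * pochhammer (of_int (- e)) n * (w - \<alpha>) powi (e - int n))
          has_field_derivative (-1) ^ Suc n * pochhammer (of_int (- e)) (Suc n) * (z - \<alpha>) powi (e - int (Suc n)))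
         (at z)"
proof -
  have "((\<lambda>w. (w - \<alpha>) powi (e - int n)) has_field_derivative
          of_int (e - int n) * (z - \<alpha>) powi (e - int n - 1)) (at z)"
    using assms by (auto intro!: derivative_eq_intros)
  from DERIV_cmult[OF this, of "(-1) ^ n * pochhammer (of_int (- e)) n"] show ?thesis
    by (simp add: pochhammer_Suc algebra_simps)
qed

lemma higher_deriv_power_int_sum:
  fixes \<alpha> z :: "'a :: real_normed_field"
  assumes "z \<noteq> \<alpha>"
  shows "(deriv ^^ n) (\<lambda>w. \<Sum>j\<in>A. c j * (w - \<alpha>) powi e j) z
           = (\<Sum>j\<in>A. c j * ((-1) ^ n * pochhammer (of_int (- e j)) n * (z - \<alpha>) powi (e j - int n)))"
  using assms
proof (induction n arbitrary: z)
  case 0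
  then show ?case by simp
next
  case (Suc n)
  define D where "D n z = (\<Sum>j\<in>A. c j * ((-1) ^ n * pochhammer (of_int (- e j)) n * (z - \<alpha>) powi (e j - int n)))"
    for n z
  have "\<forall>\<^sub>F w in nhds z. w \<in> - {\<alpha>}"
    using Suc.prems by (intro eventually_nhds_in_open) auto
  then have "\<forall>\<^sub>F w in nhds z. (deriv ^^ n) (\<lambda>w. \<Sum>j\<in>A. c j * (w - \<alpha>) powi e j) w = D n w"
    by eventually_elim (use Suc.IH in \<open>auto simp: D_def\<close>)
  then have "(deriv ^^ Suc n) (\<lambda>w. \<Sum>j\<in>A. c j * (w - \<alpha>) powi e j) z = deriv (D n) z"
    by (simp add: deriv_cong_ev)
  also have "\<dots> = D (Suc n) z"
    unfolding D_def
    by (intro DERIV_imp_deriv DERIV_sum DERIV_cmult has_field_derivative_falling_power_int Suc.prems)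
  finally show ?case by (simp add: D_def)
qed

lemma abs_pochhammer_diff_le:
  fixes K j n :: nat
  assumes "1 \<le> K" "1 \<le> j" "j < K + n"
  shows "\<bar>pochhammer (real K - real j) n\<bar> \<le> pochhammer (real K - 1) n"
proof (cases "K \<le> j")
  case True
  have "pochhammer (- of_nat (j - K) :: real) n = 0"
    using True assms(3) by (subst pochhammer_of_nat_eq_0_iff) arith
  moreover have "pochhammer (real K - 1) n \<ge> 0"
    using assms(1) unfolding pochhammer_prod by (intro prod_nonneg) auto
  ultimately show ?thesis
    using True by (simp add: of_nat_diff)
next
  case False
  have "\<bar>pochhammer (real K - real j) n\<bar> = pochhammer (real K - real j) n"
    unfolding pochhammer_prod using False by (intro abs_of_nonneg prod_nonneg) auto
  also have "\<dots> \<le> pochhammer (real K - 1) n"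
    unfolding pochhammer_prod using False assms(2) by (intro prod_mono) auto
  finally show ?thesis .
qed

lemma pochhammer_dominates_shifted:
  fixes a C c :: real
  assumes "0 \<le> a" "0 \<le> C" "C * (a + 1) < real n * c"
  shows "C * pochhammer a n < c * pochhammer (a + 1) n"
proof -
  have P: "pochhammer (a + 1) n > 0"
    using assms(1) by (intro pochhammer_pos) auto
  have "0 \<le> C * (a + 1)"
    using assms(1,2) by simp
  then have "0 < real n * c"
    using assms(3) by linarith
  then have n: "0 < a + real n" and c: "0 < c"
    using assms(1) by (auto simp: zero_less_mult_iff)
  \<comment> \<open>both sides equal \<open>pochhammer a (Suc n)\<close>\<close>
  have "pochhammer a n * (a + real n) = a * pochhammer (a + 1) n"
    using pochhammer_rec[of a n] pochhammer_rec'[of a n] by (simp add: algebra_simps)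
  then have "C * pochhammer a n * (a + real n) = C * a * pochhammer (a + 1) n"
    by (simp add: algebra_simps)
  also have "\<dots> \<le> C * (a + 1) * pochhammer (a + 1) n"
    using assms(2) P by (intro mult_right_mono mult_left_mono) auto
  also have "\<dots> < real n * c * pochhammer (a + 1) n"
    using assms(3) P by simp
  also have "\<dots> \<le> c * pochhammer (a + 1) n * (a + real n)"
    using assms(1) c P by (simp add: algebra_simps)
  finally show ?thesis
    using n by simp
qed

lemma pochhammer_sum_nonzero:
  fixes b :: "nat \<Rightarrow> complex" and w :: complex
  assumes K: "1 \<le> K" and "d < n" and w: "cmod w \<le> B"
    and dominant: "(\<Sum>j\<in>{1..d}. cmod (b j) * B ^ j) * real K < real n * cmod (b 0)"
  shows "(\<Sum>j\<le>d. b j * of_real (pochhammer (real K - real j) n) * w ^ j) \<noteq> 0"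
proof
  define C where "C = (\<Sum>j\<in>{1..d}. cmod (b j) * B ^ j)"
  define tail where "tail = (\<Sum>j\<in>{1..d}. b j * of_real (pochhammer (real K - real j) n) * w ^ j)"
  assume "(\<Sum>j\<le>d. b j * of_real (pochhammer (real K - real j) n) * w ^ j) = 0"
  moreover have "{..d} = insert 0 {1..d}"
    by auto
  ultimately have "b 0 * of_real (pochhammer (real K) n) = - tail"
    by (simp add: tail_def eq_neg_iff_add_eq_0)
  then have "cmod (b 0) * \<bar>pochhammer (real K) n\<bar> = cmod tail"
    by (metis norm_minus_cancel norm_mult norm_of_real)
  moreover have "\<bar>pochhammer (real K) n\<bar> = pochhammer (real K) n"
    using K by (intro abs_of_pos pochhammer_pos) simp
  ultimately have "cmod (b 0) * pochhammer (real K) n = cmod tail"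
    by simp
  also have "cmod tail \<le> (\<Sum>j\<in>{1..d}. cmod (b j) * B ^ j * pochhammer (real K - 1) n)"
    unfolding tail_def
  proof (rule order_trans[OF norm_sum sum_mono])
    fix j assume j: "j \<in> {1..d}"
    have "\<bar>pochhammer (real K - real j) n\<bar> \<le> pochhammer (real K - 1) n"
      using K j \<open>d < n\<close> by (intro abs_pochhammer_diff_le) auto
    moreover have "cmod w ^ j \<le> B ^ j"
      using w by (simp add: power_mono)
    ultimately have "cmod (b j) * (\<bar>pochhammer (real K - real j) n\<bar> * cmod w ^ j)
                       \<le> cmod (b j) * (pochhammer (real K - 1) n * B ^ j)"
      by (intro mult_left_mono mult_mono) auto
    then show "cmod (b j * of_real (pochhammer (real K - real j) n) * w ^ j)
                 \<le> cmod (b j) * B ^ j * pochhammer (real K - 1) n"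
      by (simp add: norm_mult norm_power ac_simps)
  qed
  also have "\<dots> = C * pochhammer (real K - 1) n"
    by (simp add: C_def sum_distrib_right)
  also have "\<dots> < cmod (b 0) * pochhammer (real K) n"
  proof -
    have "0 \<le> B"
      using w norm_ge_zero order_trans by blast
    then have "0 \<le> C"
      by (simp add: C_def sum_nonneg)
    then show ?thesis
      using pochhammer_dominates_shifted[of "real K - 1" C n "cmod (b 0)"] K dominant
      by (simp add: C_def)
  qed
  finally show False
    by simp
qed

lemma poly_div_power_pole_form:
  fixes R :: "'a :: field poly"
  assumes "R \<noteq> 0" and "\<nexists>p. \<forall>z. z \<noteq> \<alpha> \<longrightarrow> poly R z / (z - \<alpha>) ^ m = poly p z"
  obtains q K where "1 \<le> K" "poly q \<alpha> \<noteq> 0"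
    "\<And>z. z \<noteq> \<alpha> \<Longrightarrow> poly R z / (z - \<alpha>) ^ m = poly q z / (z - \<alpha>) ^ K"
proof -
  obtain q where R: "R = [:-\<alpha>, 1:] ^ order \<alpha> R * q" and "\<not> [:-\<alpha>, 1:] dvd q"
    using order_decomp[OF assms(1)] by blast
  then have q: "poly q \<alpha> \<noteq> 0"
    by (simp add: poly_eq_0_iff_dvd)
  have R_eq: "poly R z = (z - \<alpha>) ^ order \<alpha> R * poly q z" for z
    by (subst R) simp
  have "order \<alpha> R < m"
  proof (rule ccontr)
    assume "\<not> order \<alpha> R < m"
    then have "(z - \<alpha>) ^ order \<alpha> R = (z - \<alpha>) ^ (order \<alpha> R - m) * (z - \<alpha>) ^ m" for z
      by (simp flip: power_add)
    then have "poly R z / (z - \<alpha>) ^ m = poly ([:-\<alpha>, 1:] ^ (order \<alpha> R - m) * q) z" if "z \<noteq> \<alpha>" for z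
      using that by (simp add: R_eq)
    with assms(2) show False
      by blast
  qed
  then have "(z - \<alpha>) ^ m = (z - \<alpha>) ^ order \<alpha> R * (z - \<alpha>) ^ (m - order \<alpha> R)" for z
    by (simp flip: power_add)
  then have "poly R z / (z - \<alpha>) ^ m = poly q z / (z - \<alpha>) ^ (m - order \<alpha> R)" if "z \<noteq> \<alpha>" for z
    using that by (simp add: R_eq)
  with q \<open>order \<alpha> R < m\<close> show thesis
    by (intro that[of "m - order \<alpha> R"]) auto
qed

lemma higher_deriv_poly_div_power:
  fixes q :: "complex poly" and \<alpha> z :: complex
  defines "S \<equiv> pcompose q [:\<alpha>, 1:]"
  assumes "z \<noteq> \<alpha>"
  shows "(deriv ^^ n) (\<lambda>w. poly q w / (w - \<alpha>) ^ K) z = (-1) ^ n * (z - \<alpha>) powi (- int K - int n)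
           * (\<Sum>j\<le>degree S. coeff S j * of_real (pochhammer (real K - real j) n) * (z - \<alpha>) ^ j)"
proof -
  \<comment> \<open>Taylor expansion of \<open>q\<close> at \<open>\<alpha>\<close> turns the function into a finite Laurent sum\<close>
  have "poly q w = poly S (w - \<alpha>)" for w
    by (simp add: S_def poly_pcompose)
  then have "poly q w / (w - \<alpha>) ^ K = (\<Sum>j\<le>degree S. coeff S j * (w - \<alpha>) powi (int j - int K))"
    if "w \<noteq> \<alpha>" for w
    using that by (simp add: poly_altdef[of S] sum_divide_distrib power_int_diff)
  moreover have "\<forall>\<^sub>F w in nhds z. w \<in> - {\<alpha>}"
    using assms(2) by (intro eventually_nhds_in_open) auto
  ultimately have "\<forall>\<^sub>F w in nhds z. poly q w / (w - \<alpha>) ^ K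
               = (\<Sum>j\<le>degree S. coeff S j * (w - \<alpha>) powi (int j - int K))"
    by (auto elim!: eventually_mono)
  then have "(deriv ^^ n) (\<lambda>w. poly q w / (w - \<alpha>) ^ K) z
               = (deriv ^^ n) (\<lambda>w. \<Sum>j\<le>degree S. coeff S j * (w - \<alpha>) powi (int j - int K)) z"
    by (rule higher_deriv_cong_ev) simp
  also have "\<dots> = (\<Sum>j\<le>degree S. coeff S j * ((-1) ^ n * pochhammer (of_int (- (int j - int K))) n
                      * (z - \<alpha>) powi (int j - int K - int n)))"
    using assms(2) by (rule higher_deriv_power_int_sum)
  also have "\<dots> = (-1) ^ n * (z - \<alpha>) powi (- int K - int n)
           * (\<Sum>j\<le>degree S. coeff S j * of_real (pochhammer (real K - real j) n) * (z - \<alpha>) ^ j)"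
    unfolding sum_distrib_left
  proof (rule sum.cong[OF refl])
    fix j
    have "pochhammer (of_int (- (int j - int K))) n = (of_real (pochhammer (real K - real j) n) :: complex)"
      by (simp flip: pochhammer_of_real)
    moreover have "(z - \<alpha>) powi (int j - int K - int n) = (z - \<alpha>) ^ j * (z - \<alpha>) powi (- int K - int n)"
      using assms(2) power_int_add[of "z - \<alpha>" "int j" "- int K - int n"] by (simp add: algebra_simps)
    ultimately show "coeff S j * ((-1) ^ n * pochhammer (of_int (- (int j - int K))) n
                       * (z - \<alpha>) powi (int j - int K - int n))
                   = (-1) ^ n * (z - \<alpha>) powi (- int K - int n)
                       * (coeff S j * of_real (pochhammer (real K - real j) n) * (z - \<alpha>) ^ j)"
      by simp
  qed
  finally show ?thesis .
qed

lemma eventually_higher_deriv_poly_div_power_nonzero: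
  fixes q :: "complex poly" and \<alpha> :: complex
  assumes K: "1 \<le> K" and q: "poly q \<alpha> \<noteq> 0"
  shows "\<forall>\<^sub>F n in sequentially. \<forall>z. z \<noteq> \<alpha> \<and> cmod (z - \<alpha>) \<le> B \<longrightarrow>
           (deriv ^^ n) (\<lambda>w. poly q w / (w - \<alpha>) ^ K) z \<noteq> 0"
proof -
  define S where "S = pcompose q [:\<alpha>, 1:]"
  define C where "C = (\<Sum>j\<in>{1..degree S}. cmod (coeff S j) * B ^ j)"
  have S0: "coeff S 0 = poly q \<alpha>"
    by (simp add: S_def poly_0_coeff_0 [symmetric] poly_pcompose)
  with q have "\<forall>\<^sub>F n in sequentially. C * real K / cmod (coeff S 0) < real n"
    using filterlim_real_sequentially by (simp add: filterlim_at_top_dense)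
  moreover have "\<forall>\<^sub>F n in sequentially. degree S < n"
    by (rule eventually_gt_at_top)
  ultimately show ?thesis
  proof eventually_elim
    case (elim n)
    have "(\<Sum>j\<le>degree S. coeff S j * of_real (pochhammer (real K - real j) n) * (z - \<alpha>) ^ j) \<noteq> 0"
      if "cmod (z - \<alpha>) \<le> B" for z
      using elim q S0 that by (intro pochhammer_sum_nonzero K) (auto simp: C_def field_simps)
    then show ?case
      by (simp add: higher_deriv_poly_div_power S_def)
  qed
qed

theorem lemma4p8:
  fixes R :: "complex poly" and m :: nat and \<alpha> :: complex
  assumes "R \<noteq> 0" and "m \<ge> 1"
    and "\<not> (\<exists>p :: complex poly. \<forall>z. z \<noteq> \<alpha> \<longrightarrow> poly R z / (z - \<alpha>) ^ m = poly p z)"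
  shows "\<forall>r>0. \<forall>\<^sub>F n in sequentially. \<forall>z. cmod z < r \<and> z \<noteq> \<alpha> \<longrightarrow>
           (deriv ^^ n) (\<lambda>w. poly R w / (w - \<alpha>) ^ m) z \<noteq> 0"
proof (intro allI impI)
  fix r :: real
  obtain q K where "1 \<le> K" "poly q \<alpha> \<noteq> 0"
    and R: "\<And>z. z \<noteq> \<alpha> \<Longrightarrow> poly R z / (z - \<alpha>) ^ m = poly q z / (z - \<alpha>) ^ K"
    using poly_div_power_pole_form[OF assms(1,3)] by blast
  have "(deriv ^^ n) (\<lambda>w. poly R w / (w - \<alpha>) ^ m) z = (deriv ^^ n) (\<lambda>w. poly q w / (w - \<alpha>) ^ K) z"
    if "z \<noteq> \<alpha>" for n z
  proof (rule higher_deriv_cong_ev)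
    have "\<forall>\<^sub>F w in nhds z. w \<in> - {\<alpha>}"
      using that by (intro eventually_nhds_in_open) auto
    then show "\<forall>\<^sub>F w in nhds z. poly R w / (w - \<alpha>) ^ m = poly q w / (w - \<alpha>) ^ K"
      by (auto elim!: eventually_mono simp: R)
  qed simp
  moreover have "cmod (z - \<alpha>) \<le> r + cmod \<alpha>" if "cmod z < r" for z
    using norm_triangle_ineq4[of z \<alpha>] that by simp
  ultimately show "\<forall>\<^sub>F n in sequentially. \<forall>z. cmod z < r \<and> z \<noteq> \<alpha> \<longrightarrow>
                     (deriv ^^ n) (\<lambda>w. poly R w / (w - \<alpha>) ^ m) z \<noteq> 0"
    using eventually_higher_deriv_poly_div_power_nonzero[OF \<open>1 \<le> K\<close> \<open>poly q \<alpha> \<noteq> 0\<close>, of "r + cmod \<alpha>"]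
    by (auto elim!: eventually_mono)
qed

end
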